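(* Let $\mathcal{A}$ be a finite set, $d\ge1$, and let $\mathcal{M}=\{(\mu_i,D_i)\}_{i=1}^\infty$ be locally mixing with $D_i\uparrow\mathbb{Z}^d$ as $i\to\infty$ (each $\mu_i$ a probability measure on $\mathcal{A}^{D_i}$). Then $\mu_i$ converges as $i\to\infty$ (in the sense of convergence of the marginals on every finite set) to a probability measure $\mu$ on $\mathcal{A}^{\mathbb{Z}^d}$, and $\mu$ is locally mixing with the same rate function.
   Context: A rate function is a decreasing function $\rho:\mathbb{N}\to[0,\infty)$ with $\rho(k)\to0$ as $k\to\infty$. Let $\Lambda_n=[-n,n]^d\cap\mathbb{Z}^d$. Let $\mathcal{M}$ be a collection of pairs $(\mu,D)$ with $D\subset\mathbb{Z}^d$ (possibly infinite) and $\mu$ a probability measure on $\mathcal{A}^D$. $\mathcal{M}$ is locally mixing with rate function $\rho$ if for every $n\ge1$ and all $(\mu,D),(\mu',D')\in\mathcal{M}$ with $\Lambda_n\subset D\cap D'$ there exists a coupling of $f\sim\mu$ and $f'\sim\mu'$ such that (1) $f|_{D\setminus\Lambda_n}$ and $f'$ are independent, and (2) $\mathbb{P}(f(v)\neq f'(v))\le\rho(n-k)$ for every $0\le k\le n$ and every $v\in\Lambda_k$. $\mathcal{M}$ is locally mixing if it is locally mixing with some rate function. A single measure $\mu$ on $\mathcal{A}^{\mathbb{Z}^d}$ is locally mixing (with rate $\rho$) if $\{(\mu,\mathbb{Z}^d)\}$ is. *)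

theory Defs
  imports "HOL-Probability.Probability"
begin

text \<open>Sites of the lattice Z^d are vectors int ^ 'd with 'd a finite index type
  (d = CARD('d) >= 1). The alphabet is a finite type 'a.\<close>

definition box :: "nat \<Rightarrow> (int ^ 'd::finite) set" where
  "box n = {v. \<forall>i. \<bar>v $ i\<bar> \<le> int n}"

definition config_space :: "(int ^ 'd::finite) set \<Rightarrow> ((int ^ 'd) \<Rightarrow> 'a) measure" where
  "config_space D = PiM D (\<lambda>_. count_space UNIV)"

definition rate_function :: "(nat \<Rightarrow> real) \<Rightarrow> bool" where
  "rate_function \<rho> \<longleftrightarrow> antimono \<rho> \<and> (\<forall>k. 0 \<le> \<rho> k) \<and> \<rho> \<longlonglongrightarrow> 0"

definition is_coupling ::
  "((int ^ 'd::finite \<Rightarrow> 'a) \<times> (int ^ 'd \<Rightarrow> 'a)) measure \<Rightarrow>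
   (int ^ 'd \<Rightarrow> 'a) measure \<Rightarrow> (int ^ 'd) set \<Rightarrow>
   (int ^ 'd \<Rightarrow> 'a) measure \<Rightarrow> (int ^ 'd) set \<Rightarrow> bool" where
  "is_coupling \<nu> \<mu> D \<mu>' D' \<longleftrightarrow>
     prob_space \<nu> \<and> sets \<nu> = sets (config_space D \<Otimes>\<^sub>M config_space D') \<and>
     distr \<nu> (config_space D) fst = \<mu> \<and> distr \<nu> (config_space D') snd = \<mu>'"

definition locally_mixing_with ::
  "((int ^ 'd::finite \<Rightarrow> 'a) measure \<times> (int ^ 'd) set) set \<Rightarrow> (nat \<Rightarrow> real) \<Rightarrow> bool" where
  "locally_mixing_with M \<rho> \<longleftrightarrow> rate_function \<rho> \<and>
    (\<forall>n\<ge>1. \<forall>(\<mu>, D)\<in>M. \<forall>(\<mu>', D')\<in>M. box n \<subseteq> D \<inter> D' \<longrightarrow>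
       (\<exists>\<nu>. is_coupling \<nu> \<mu> D \<mu>' D' \<and>
          prob_space.indep_var \<nu>
             (config_space (D - box n)) (\<lambda>p. restrict (fst p) (D - box n))
             (config_space D') snd \<and>
          (\<forall>k\<le>n. \<forall>v\<in>box k.
             measure \<nu> {p \<in> space \<nu>. fst p v \<noteq> snd p v} \<le> \<rho> (n - k))))"

definition locally_mixing ::
  "((int ^ 'd::finite \<Rightarrow> 'a) measure \<times> (int ^ 'd) set) set \<Rightarrow> bool" where
  "locally_mixing M \<longleftrightarrow> (\<exists>\<rho>. locally_mixing_with M \<rho>)"

end

theory Submission
  imports Defs "HOL-Library.Diagonal_Subsequence"
begin

(* Couple \<mu>_i with \<mu>_j by the mixing coupling at scale n: the probabilities of a cylinder
   event on a finite set J \<subseteq> \<Lambda>_k then differ by at most |J| \<rho>(n - k), so all cylinder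
   probabilities converge. Their limits are consistent finite-dimensional distributions, which
   extend to a measure \<mu> on A^(Z^d) by the Kolmogorov extension theorem.
   For the mixing property of \<mu> at scale n, couple each \<mu>_i with itself at scale n. A diagonal
   subsequence makes all cylinder probabilities of the pair (f, f') converge, and the limit is a
   coupling of \<mu> with itself. Its marginals, the disagreement bounds P(f v \<noteq> f' v) \<le> \<rho>(n - k) and
   the independence of f outside \<Lambda>_n from f' are statements about finitely many sites at a time,
   so they pass to the limit. *)

section \<open>Events depending on finitely many coordinates\<close>

lemma measurable_component_PiM_count_space:
  "(\<lambda>f. f v) \<in> measurable (PiM I (\<lambda>_. count_space UNIV)) (count_space UNIV)"
proof (cases "v \<in> I")
  case True
  then show ?thesis by (rule measurable_component_singleton)
next
  case False
  show ?thesis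
    by (rule measurable_cong[where f = "\<lambda>_. undefined", THEN iffD1])
       (use False in \<open>auto simp: space_PiM PiE_def extensional_def\<close>)
qed

lemma measurable_component_sets_PiM:
  assumes "sets M = sets (PiM I (\<lambda>_. count_space UNIV))"
  shows "(\<lambda>f. f v) \<in> measurable M (count_space UNIV)"
  using measurable_component_PiM_count_space by (simp add: measurable_cong_sets[OF assms refl])

lemma restrict_eq_iff:
  "\<eta> \<in> PiE J (\<lambda>_. UNIV) \<Longrightarrow> restrict f J = \<eta> \<longleftrightarrow> (\<forall>v\<in>J. f v = \<eta> v)"
  by (auto simp: restrict_def PiE_def extensional_def fun_eq_iff)

lemma local_event_sets:
  fixes X :: "'m \<Rightarrow> 'i \<Rightarrow> 'b::countable"
  assumes J: "finite J" and X: "\<And>v. (\<lambda>x. X x v) \<in> measurable M (count_space UNIV)"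
  shows "{x \<in> space M. \<Phi> (restrict (X x) J)} \<in> sets M"
proof -
  let ?S = "{\<eta> \<in> PiE J (\<lambda>_. UNIV). \<Phi> \<eta>}"
  have "{x \<in> space M. \<Phi> (restrict (X x) J)} = (\<Union>\<eta>\<in>?S. {x \<in> space M. restrict (X x) J = \<eta>})"
    by auto
  also have "\<dots> = (\<Union>\<eta>\<in>?S. {x \<in> space M. \<forall>v\<in>J. X x v = \<eta> v})"
    using restrict_eq_iff by blast
  also have "\<dots> \<in> sets M"
  proof (rule sets.countable_UN')
    have "?S \<subseteq> PiE J (\<lambda>_. UNIV)"
      by blast
    then show "countable ?S"
      by (rule countable_subset) (simp add: J countable_PiE)
    note X[measurable]
    have "{x \<in> space M. \<forall>v\<in>J. X x v = \<eta> v} \<in> sets M" for \<eta>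
      using J by measurable
    then show "(\<lambda>\<eta>. {x \<in> space M. \<forall>v\<in>J. X x v = \<eta> v}) ` ?S \<subseteq> sets M"
      by blast
  qed
  finally show ?thesis .
qed

lemma measure_local_event_sum:
  fixes X :: "'m \<Rightarrow> 'i \<Rightarrow> 'b::finite"
  assumes "finite_measure M" and J: "finite J"
    and X: "\<And>v. (\<lambda>x. X x v) \<in> measurable M (count_space UNIV)"
  shows "measure M {x \<in> space M. \<Phi> (restrict (X x) J)} =
    (\<Sum>\<eta>\<in>{\<eta> \<in> PiE J (\<lambda>_. UNIV). \<Phi> \<eta>}. measure M {x \<in> space M. restrict (X x) J = \<eta>})"
proof -
  let ?S = "{\<eta> \<in> PiE J (\<lambda>_. UNIV). \<Phi> \<eta>}"
  have "{x \<in> space M. \<Phi> (restrict (X x) J)} = (\<Union>\<eta>\<in>?S. {x \<in> space M. restrict (X x) J = \<eta>})"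
    by auto
  also have "measure M \<dots> = (\<Sum>\<eta>\<in>?S. measure M {x \<in> space M. restrict (X x) J = \<eta>})"
  proof (rule measure_finite_Union)
    show "finite ?S"
      by (rule finite_subset[OF _ finite_PiE[OF J]]) auto
    show "(\<lambda>\<eta>. {x \<in> space M. restrict (X x) J = \<eta>}) ` ?S \<subseteq> sets M"
      using local_event_sets[where X = X and \<Phi> = "\<lambda>\<xi>. \<xi> = _", OF J X] by blast
    show "disjoint_family_on (\<lambda>\<eta>. {x \<in> space M. restrict (X x) J = \<eta>}) ?S"
      by (auto simp: disjoint_family_on_def)
    show "emeasure M {x \<in> space M. restrict (X x) J = \<eta>} \<noteq> \<infinity>" for \<eta>
      using \<open>finite_measure M\<close> by (simp add: finite_measure.emeasure_finite)
  qed
  finally show ?thesis .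
qed

lemma measure_eqI_cylinders:
  fixes M M' :: "('i \<Rightarrow> 'b::finite) measure"
  assumes "prob_space M" "prob_space M'"
    and sets: "sets M = sets (PiM UNIV (\<lambda>_. count_space UNIV))"
      "sets M' = sets (PiM UNIV (\<lambda>_. count_space UNIV))"
    and eq: "\<And>J \<eta>. finite J \<Longrightarrow>
      measure M {f \<in> space M. restrict f J = \<eta>} = measure M' {f \<in> space M'. restrict f J = \<eta>}"
  shows "M = M'"
proof (rule measure_eqI_PiM_infinite[OF sets])
  show "finite_measure M" using \<open>prob_space M\<close> by (rule prob_space.finite_measure)
  fix J :: "'i set" and A :: "'i \<Rightarrow> 'b set"
  assume J: "finite J"
  have space: "space M = UNIV" "space M' = UNIV"
    using sets_eq_imp_space_eq[OF sets(1)] sets_eq_imp_space_eq[OF sets(2)] by (simp_all add: space_PiM)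
  let ?S = "{\<eta> \<in> PiE J (\<lambda>_. UNIV). \<eta> \<in> PiE J A}"
  have "measure M {f \<in> space M. restrict f J \<in> PiE J A} =
      (\<Sum>\<eta>\<in>?S. measure M {f \<in> space M. restrict f J = \<eta>})"
    by (rule measure_local_event_sum[where X = "\<lambda>f. f" and \<Phi> = "\<lambda>\<xi>. \<xi> \<in> PiE J A",
          OF prob_space.finite_measure[OF assms(1)] J measurable_component_sets_PiM[OF sets(1)]])
  also have "\<dots> = (\<Sum>\<eta>\<in>?S. measure M' {f \<in> space M'. restrict f J = \<eta>})"
    using eq[OF J] by simp
  also have "\<dots> = measure M' {f \<in> space M'. restrict f J \<in> PiE J A}"
    by (rule measure_local_event_sum[where X = "\<lambda>f. f" and \<Phi> = "\<lambda>\<xi>. \<xi> \<in> PiE J A",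
          OF prob_space.finite_measure[OF assms(2)] J measurable_component_sets_PiM[OF sets(2)], symmetric])
  finally have "measure M {f \<in> space M. restrict f J \<in> PiE J A} =
      measure M' {f \<in> space M'. restrict f J \<in> PiE J A}" .
  moreover have "prod_emb UNIV (\<lambda>_. count_space UNIV) J (PiE J A) = {f. restrict f J \<in> PiE J A}"
    by (auto simp: prod_emb_def)
  ultimately show "emeasure M (prod_emb UNIV (\<lambda>_. count_space UNIV) J (PiE J A)) =
      emeasure M' (prod_emb UNIV (\<lambda>_. count_space UNIV) J (PiE J A))"
    using assms(1,2) by (simp add: space finite_measure.emeasure_eq_measure prob_space.finite_measure)
qed

lemma distr_eqI_cylinders:
  fixes \<pi> :: "'m \<Rightarrow> 'i \<Rightarrow> 'b::finite"
  defines "P \<equiv> PiM UNIV (\<lambda>_. count_space UNIV) :: ('i \<Rightarrow> 'b) measure"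
  assumes "prob_space N" and \<pi>: "\<pi> \<in> measurable N P"
    and "prob_space M" "sets M = sets P"
    and eq: "\<And>J \<eta>. finite J \<Longrightarrow>
      measure N {x \<in> space N. restrict (\<pi> x) J = \<eta>} = measure M {f \<in> space M. restrict f J = \<eta>}"
  shows "distr N P \<pi> = M"
proof (rule measure_eqI_cylinders)
  show "prob_space (distr N P \<pi>)"
    using \<open>prob_space N\<close> \<pi> by (rule prob_space.prob_space_distr)
  fix J :: "'i set" and \<eta> :: "'i \<Rightarrow> 'b" assume J: "finite J"
  have "{f \<in> space P. restrict f J = \<eta>} \<in> sets P"
    unfolding P_def
    by (rule local_event_sets[where X = "\<lambda>f. f" and \<Phi> = "\<lambda>\<xi>. \<xi> = \<eta>", OF J measurable_component_PiM_count_space])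
  then have "measure (distr N P \<pi>) {f \<in> space P. restrict f J = \<eta>} =
      measure N (\<pi> -` {f \<in> space P. restrict f J = \<eta>} \<inter> space N)"
    by (rule measure_distr[OF \<pi>])
  also have "\<pi> -` {f \<in> space P. restrict f J = \<eta>} \<inter> space N = {x \<in> space N. restrict (\<pi> x) J = \<eta>}"
    using measurable_space[OF \<pi>] by blast
  finally show "measure (distr N P \<pi>) {f \<in> space (distr N P \<pi>). restrict f J = \<eta>} =
      measure M {f \<in> space M. restrict f J = \<eta>}"
    by (simp only: space_distr eq[OF J])
qed (simp_all add: assms)

lemma (in prob_space) cylinder_prob_diff_le:
  fixes X Y :: "'a \<Rightarrow> 'i \<Rightarrow> 'b::countable"
  assumes J: "finite J"
    and X: "\<And>v. (\<lambda>x. X x v) \<in> measurable M (count_space UNIV)"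
    and Y: "\<And>v. (\<lambda>x. Y x v) \<in> measurable M (count_space UNIV)"
  shows "\<bar>prob {x \<in> space M. restrict (X x) J = \<eta>} - prob {x \<in> space M. restrict (Y x) J = \<eta>}\<bar>
    \<le> (\<Sum>v\<in>J. prob {x \<in> space M. X x v \<noteq> Y x v})"
proof -
  define A where "A = {x \<in> space M. restrict (X x) J = \<eta>}"
  define B where "B = {x \<in> space M. restrict (Y x) J = \<eta>}"
  define C where "C = (\<Union>v\<in>J. {x \<in> space M. X x v \<noteq> Y x v})"
  have disagree: "{x \<in> space M. X x v \<noteq> Y x v} \<in> events" for v
  proof -
    have "{x \<in> space M. X x v \<noteq> Y x v} = (\<lambda>x. (X x v, Y x v)) -` {p. fst p \<noteq> snd p} \<inter> space M"
      by auto
    also have "(\<lambda>x. (X x v, Y x v)) \<in> measurable M (count_space UNIV)"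
      using measurable_Pair[OF X Y] by (simp add: pair_measure_countable)
    then have "(\<lambda>x. (X x v, Y x v)) -` {p. fst p \<noteq> snd p} \<inter> space M \<in> events"
      by (rule measurable_sets) simp
    finally show ?thesis .
  qed
  have events: "A \<in> events" "B \<in> events" "C \<in> events"
    unfolding A_def B_def C_def using local_event_sets[OF J X] local_event_sets[OF J Y] J disagree
    by auto
  have "A \<subseteq> B \<union> C" "B \<subseteq> A \<union> C"
    unfolding A_def B_def C_def by (auto simp: restrict_def fun_eq_iff)
  then have "prob A \<le> prob B + prob C" "prob B \<le> prob A + prob C"
    using events by (metis finite_measure_mono measure_Un_le sets.Un order_trans)+
  moreover have "prob C \<le> (\<Sum>v\<in>J. prob {x \<in> space M. X x v \<noteq> Y x v})"
    unfolding C_def using J disagree by (intro finite_measure_subadditive_finite) auto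
  ultimately show ?thesis
    unfolding A_def B_def by linarith
qed

section \<open>Kolmogorov extension and limits of cylinder probabilities\<close>

definition discrete_restrict :: "'i set \<Rightarrow> ('i \<Rightarrow> 'b) \<Rightarrow> 'i \<Rightarrow> 'b discrete" where
  "discrete_restrict J \<eta> = restrict (\<lambda>i. discrete (\<eta> i)) J"

lemma discrete_restrict_eq_iff: "discrete_restrict J \<xi> = discrete_restrict J \<eta> \<longleftrightarrow> restrict \<xi> J = restrict \<eta> J"
  by (auto simp: discrete_restrict_def restrict_def fun_eq_iff discrete_inject)

lemma measurable_discrete_restrict:
  "sets M = UNIV \<Longrightarrow> discrete_restrict J \<in> measurable M (PiM J (\<lambda>_. borel))"
  by (auto simp: measurable_def discrete_restrict_def space_PiM)

locale projective_pmfs =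
  fixes p :: "'i set \<Rightarrow> ('i \<Rightarrow> 'b::countable) pmf"
  assumes projective: "\<And>J H. finite H \<Longrightarrow> J \<subseteq> H \<Longrightarrow> map_pmf (\<lambda>\<eta>. restrict \<eta> J) (p H) = p J"
begin

lemma set_pmf_subset_PiE:
  assumes "finite J"
  shows "set_pmf (p J) \<subseteq> PiE J (\<lambda>_. UNIV)"
proof -
  have "set_pmf (p J) = (\<lambda>\<eta>. restrict \<eta> J) ` set_pmf (p J)"
    by (metis projective[OF assms subset_refl] set_map_pmf)
  also have "\<dots> \<subseteq> PiE J (\<lambda>_. UNIV)"
    by auto
  finally show ?thesis .
qed

(* The projective limit theorem of the library needs Polish coordinate spaces, so the
   coordinates are moved to the discrete topology on 'b discrete. *)
definition discrete_law :: "'i set \<Rightarrow> ('i \<Rightarrow> 'b discrete) measure" where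
  "discrete_law J = distr (measure_pmf (p J)) (PiM J (\<lambda>_. borel)) (discrete_restrict J)"

lemma projective_family_discrete_law: "projective_family UNIV discrete_law (\<lambda>_. borel)"
proof (rule projective_family.intro)
  fix J H :: "'i set" assume JH: "J \<subseteq> H" "finite H" "H \<subseteq> UNIV"
  have "distr (discrete_law H) (PiM J (\<lambda>_. borel)) (\<lambda>f. restrict f J) =
      distr (measure_pmf (p H)) (PiM J (\<lambda>_. borel)) ((\<lambda>f. restrict f J) \<circ> discrete_restrict H)"
    unfolding discrete_law_def
    by (rule distr_distr[OF measurable_restrict_subset[OF JH(1)] measurable_discrete_restrict]) simp
  also have "(\<lambda>f. restrict f J) \<circ> discrete_restrict H = discrete_restrict J \<circ> (\<lambda>\<eta>. restrict \<eta> J)"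
    using JH(1) by (auto simp: discrete_restrict_def fun_eq_iff)
  also have "distr (measure_pmf (p H)) (PiM J (\<lambda>_. borel)) \<dots> =
      distr (map_pmf (\<lambda>\<eta>. restrict \<eta> J) (p H)) (PiM J (\<lambda>_. borel)) (discrete_restrict J)"
    unfolding map_pmf_rep_eq by (rule distr_distr[symmetric, OF measurable_discrete_restrict]) simp_all
  finally show "discrete_law J = distr (discrete_law H) (PiM J (\<lambda>_. borel)) (\<lambda>f. restrict f J)"
    unfolding projective[OF JH(2,1)] discrete_law_def by (rule sym)
next
  show "prob_space (discrete_law J)" for J
    unfolding discrete_law_def
    by (intro prob_space.prob_space_distr prob_space_measure_pmf measurable_discrete_restrict) simp
qed

sublocale polish_projective UNIV discrete_law
  by (simp add: polish_projective_def projective_family_discrete_law)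

definition extension :: "('i \<Rightarrow> 'b) measure" where
  "extension = distr lim (PiM UNIV (\<lambda>_. count_space UNIV)) (\<lambda>\<omega> i. of_discrete (\<omega> i))"

lemma measurable_of_discrete: "(\<lambda>\<omega> i. of_discrete (\<omega> i)) \<in> measurable lim (PiM UNIV (\<lambda>_. count_space UNIV))"
proof (rule measurable_PiM_single')
  have "of_discrete \<in> measurable (borel :: 'b discrete measure) (count_space UNIV)"
    by (simp add: measurable_cong_sets[OF sets_borel_eq_count_space refl])
  then show "(\<lambda>\<omega>. of_discrete (\<omega> i)) \<in> measurable lim (count_space UNIV)" for i
    by (rule measurable_compose[rotated])
       (simp add: measurable_cong_sets[OF sets_lim refl] measurable_component_singleton)
qed auto

lemma prob_space_extension: "prob_space extension"
  unfolding extension_def using measurable_of_discrete by (rule P.prob_space_distr)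

lemma sets_extension: "sets extension = sets (PiM UNIV (\<lambda>_. count_space UNIV))"
  by (simp add: extension_def)

lemma measure_extension_cylinder_PiE:
  assumes J: "finite J" and \<eta>: "\<eta> \<in> PiE J (\<lambda>_. UNIV)"
  shows "measure extension {f \<in> space extension. restrict f J = \<eta>} = pmf (p J) \<eta>"
proof -
  let ?\<eta> = "discrete_restrict J \<eta>"
  have "{?\<eta>} = PiE J (\<lambda>i. {?\<eta> i})"
    by (rule PiE_singleton[symmetric]) (simp add: discrete_restrict_def)
  then have \<eta>_sets: "{?\<eta>} \<in> sets (PiM J (\<lambda>_. borel :: 'b discrete measure))"
    using J by (auto intro: sets_PiM_I_finite simp: sets_borel_eq_count_space)
  have "{f \<in> space extension. restrict f J = \<eta>} \<in> sets (PiM UNIV (\<lambda>_. count_space UNIV))"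
    unfolding extension_def space_distr
    by (rule local_event_sets[where X = "\<lambda>f. f" and \<Phi> = "\<lambda>\<xi>. \<xi> = \<eta>", OF J measurable_component_PiM_count_space])
  then have "measure extension {f \<in> space extension. restrict f J = \<eta>} =
      measure lim ((\<lambda>\<omega> i. of_discrete (\<omega> i)) -` {f \<in> space extension. restrict f J = \<eta>} \<inter> space lim)"
    unfolding extension_def by (rule measure_distr[OF measurable_of_discrete])
  also have "(\<lambda>\<omega> i. of_discrete (\<omega> i)) -` {f \<in> space extension. restrict f J = \<eta>} \<inter> space lim = emb UNIV J {?\<eta>}"
  proof -
    have "restrict (\<lambda>i. of_discrete (\<omega> i)) J = \<eta> \<longleftrightarrow> restrict \<omega> J = ?\<eta>" for \<omega> :: "'i \<Rightarrow> 'b discrete"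
    proof -
      have "restrict (\<lambda>i. of_discrete (\<omega> i)) J = \<eta> \<longleftrightarrow> (\<forall>v\<in>J. of_discrete (\<omega> v) = \<eta> v)"
        using restrict_eq_iff[OF \<eta>] by simp
      also have "\<dots> \<longleftrightarrow> (\<forall>v\<in>J. \<omega> v = discrete (\<eta> v))"
        by (metis of_discrete_inverse discrete_inverse UNIV_I)
      also have "\<dots> \<longleftrightarrow> restrict \<omega> J = ?\<eta>"
        using restrict_eq_iff[of ?\<eta> J \<omega>] by (simp add: discrete_restrict_def)
      finally show ?thesis .
    qed
    then show ?thesis
      by (auto simp: extension_def space_PiM prod_emb_def sets_eq_imp_space_eq[OF sets_lim])
  qed
  also have "measure lim (emb UNIV J {?\<eta>}) = measure (discrete_law J) {?\<eta>}"
    using J \<eta>_sets by (intro measure_lim_emb) auto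
  also have "\<dots> = measure (measure_pmf (p J)) (discrete_restrict J -` {?\<eta>})"
    unfolding discrete_law_def by (rule measure_distr[OF measurable_discrete_restrict[OF sets_measure_pmf] \<eta>_sets, simplified])
  also have "\<dots> = measure (measure_pmf (p J)) {\<eta>}"
    using set_pmf_subset_PiE[OF J] \<eta>
    by (intro measure_eq_AE AE_pmfI) (auto simp: discrete_restrict_eq_iff PiE_restrict)
  also have "\<dots> = pmf (p J) \<eta>"
    by (rule measure_pmf_single)
  finally show ?thesis .
qed

lemma measure_extension_cylinder:
  assumes J: "finite J"
  shows "measure extension {f \<in> space extension. restrict f J = \<eta>} = pmf (p J) \<eta>"
proof (cases "\<eta> \<in> PiE J (\<lambda>_. UNIV)")
  case False
  then have "{f \<in> space extension. restrict f J = \<eta>} = {}" and "\<eta> \<notin> set_pmf (p J)"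
    using set_pmf_subset_PiE[OF J] by auto
  then show ?thesis
    by (simp only: measure_empty set_pmf_iff not_not)
qed (use J measure_extension_cylinder_PiE in blast)

end

lemma embed_pmf_finite_support:
  assumes A: "finite A" and nonneg: "\<And>x. 0 \<le> f x" and vanish: "\<And>x. x \<notin> A \<Longrightarrow> f x = 0"
    and sum_one: "sum f A = 1"
  shows "pmf (embed_pmf f) = f"
    and "measure (embed_pmf f) B = sum f (A \<inter> B)"
proof -
  have "(\<integral>\<^sup>+x. ennreal (f x) \<partial>count_space UNIV) = (\<Sum>x\<in>A. ennreal (f x))"
    using A vanish by (intro nn_integral_count_space') auto
  also have "\<dots> = 1"
    using nonneg sum_one by (subst sum_ennreal) auto
  finally show pmf: "pmf (embed_pmf f) = f"
    using nonneg by (simp add: fun_eq_iff pmf_embed_pmf)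
  have "set_pmf (embed_pmf f) \<subseteq> A"
  proof
    fix x assume "x \<in> set_pmf (embed_pmf f)"
    then have "f x \<noteq> 0"
      by (simp add: set_pmf_iff pmf)
    then show "x \<in> A"
      using vanish by blast
  qed
  then have "B \<inter> set_pmf (embed_pmf f) = (A \<inter> B) \<inter> set_pmf (embed_pmf f)"
    by blast
  then have "measure (embed_pmf f) B = measure (embed_pmf f) (A \<inter> B)"
    by (metis measure_Int_set_pmf)
  also have "\<dots> = sum f (A \<inter> B)"
    using A by (simp add: measure_measure_pmf_finite pmf)
  finally show "measure (embed_pmf f) B = sum f (A \<inter> B)" .
qed

lemma kolmogorov_extension:
  fixes q :: "'i set \<Rightarrow> ('i \<Rightarrow> 'b::finite) \<Rightarrow> real"
  assumes nonneg: "\<And>J \<eta>. finite J \<Longrightarrow> 0 \<le> q J \<eta>"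
    and sum_one: "\<And>J. finite J \<Longrightarrow> (\<Sum>\<eta>\<in>PiE J (\<lambda>_. UNIV). q J \<eta>) = 1"
    and consistent: "\<And>J H \<eta>. finite H \<Longrightarrow> J \<subseteq> H \<Longrightarrow>
      q J \<eta> = (\<Sum>\<xi>\<in>{\<xi> \<in> PiE H (\<lambda>_. UNIV). restrict \<xi> J = \<eta>}. q H \<xi>)"
  shows "\<exists>M. prob_space M \<and> sets M = sets (PiM UNIV (\<lambda>_. count_space UNIV)) \<and>
    (\<forall>J \<eta>. finite J \<longrightarrow> measure M {f \<in> space M. restrict f J = \<eta>} = q J \<eta>)"
proof -
  have vanish: "q J \<eta> = 0" if "finite J" "\<eta> \<notin> PiE J (\<lambda>_. UNIV)" for J \<eta>
  proof -
    have "{\<xi> \<in> PiE J (\<lambda>_. UNIV). restrict \<xi> J = \<eta>} = {}"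
      using that(2) by (auto simp: PiE_restrict)
    then show ?thesis
      using consistent[OF that(1) subset_refl, of \<eta>] by simp
  qed
  note embed_q = embed_pmf_finite_support[of "PiE J (\<lambda>_. UNIV)" "q J" for J,
      OF finite_PiE nonneg vanish sum_one, simplified]
  have "projective_pmfs (\<lambda>J. embed_pmf (q J))"
  proof
    fix J H :: "'i set" assume H: "finite H" and JH: "J \<subseteq> H"
    show "map_pmf (\<lambda>\<eta>. restrict \<eta> J) (embed_pmf (q H)) = embed_pmf (q J)"
    proof (rule pmf_eqI)
      fix \<eta>
      have "pmf (map_pmf (\<lambda>\<eta>. restrict \<eta> J) (embed_pmf (q H))) \<eta> =
          measure (embed_pmf (q H)) ((\<lambda>\<xi>. restrict \<xi> J) -` {\<eta>})"
        by (rule pmf_map)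
      also have "\<dots> = q J \<eta>"
        using H by (simp add: embed_q consistent[OF H JH] Int_def conj_commute)
      finally show "pmf (map_pmf (\<lambda>\<eta>. restrict \<eta> J) (embed_pmf (q H))) \<eta> = pmf (embed_pmf (q J)) \<eta>"
        using finite_subset[OF JH H] by (simp add: embed_q)
    qed
  qed
  then interpret projective_pmfs "\<lambda>J. embed_pmf (q J)" .
  show ?thesis
    using prob_space_extension sets_extension measure_extension_cylinder by (auto simp: embed_q)
qed

lemma limit_measure_of_convergent_cylinders:
  fixes X :: "nat \<Rightarrow> 'm \<Rightarrow> 'i \<Rightarrow> 'b::finite"
  assumes prob: "\<And>i. prob_space (M i)"
    and X: "\<And>i v. (\<lambda>x. X i x v) \<in> measurable (M i) (count_space UNIV)"
    and conv: "\<And>J \<eta>. finite J \<Longrightarrow> convergent (\<lambda>i. measure (M i) {x \<in> space (M i). restrict (X i x) J = \<eta>})"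
  shows "\<exists>L. prob_space L \<and> sets L = sets (PiM UNIV (\<lambda>_. count_space UNIV)) \<and>
    (\<forall>J \<Phi>. finite J \<longrightarrow> (\<lambda>i. measure (M i) {x \<in> space (M i). \<Phi> (restrict (X i x) J)})
      \<longlonglongrightarrow> measure L {f \<in> space L. \<Phi> (restrict f J)})"
proof -
  define q where "q J \<eta> = lim (\<lambda>i. measure (M i) {x \<in> space (M i). restrict (X i x) J = \<eta>})" for J \<eta>
  have lim_q: "(\<lambda>i. measure (M i) {x \<in> space (M i). restrict (X i x) J = \<eta>}) \<longlonglongrightarrow> q J \<eta>"
    if "finite J" for J \<eta>
    using conv[OF that] unfolding q_def by (simp add: convergent_LIMSEQ_iff)
  have lim_local: "(\<lambda>i. measure (M i) {x \<in> space (M i). \<Phi> (restrict (X i x) J)}) \<longlonglongrightarrow>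
      (\<Sum>\<eta>\<in>{\<eta> \<in> PiE J (\<lambda>_. UNIV). \<Phi> \<eta>}. q J \<eta>)" if J: "finite J" for J \<Phi>
    using prob J X
    by (simp add: measure_local_event_sum prob_space.finite_measure)
       (intro tendsto_sum lim_q J)
  have "\<exists>L. prob_space L \<and> sets L = sets (PiM UNIV (\<lambda>_. count_space UNIV)) \<and>
    (\<forall>J \<eta>. finite J \<longrightarrow> measure L {f \<in> space L. restrict f J = \<eta>} = q J \<eta>)"
  proof (rule kolmogorov_extension)
    show "0 \<le> q J \<eta>" if "finite J" for J \<eta>
      by (rule LIMSEQ_le_const[OF lim_q[OF that]]) simp
    show "(\<Sum>\<eta>\<in>PiE J (\<lambda>_. UNIV). q J \<eta>) = 1" if "finite J" for J
      using lim_local[OF that, of "\<lambda>_. True"] prob by (simp add: prob_space.prob_space LIMSEQ_const_iff)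
    show "q J \<eta> = (\<Sum>\<xi>\<in>{\<xi> \<in> PiE H (\<lambda>_. UNIV). restrict \<xi> J = \<eta>}. q H \<xi>)"
      if "finite H" "J \<subseteq> H" for J H \<eta>
    proof -
      have "restrict (restrict f H) J = restrict f J" for f :: "'i \<Rightarrow> 'b"
        using that(2) by (auto simp: restrict_def fun_eq_iff)
      then show ?thesis
        using lim_local[OF that(1), of "\<lambda>\<xi>. restrict \<xi> J = \<eta>"] lim_q[OF finite_subset[OF that(2,1)], of \<eta>]
        by (simp add: LIMSEQ_unique)
    qed
  qed
  then obtain L where L: "prob_space L" "sets L = sets (PiM UNIV (\<lambda>_. count_space UNIV))"
    and cylinder: "\<And>J \<eta>. finite J \<Longrightarrow> measure L {f \<in> space L. restrict f J = \<eta>} = q J \<eta>"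
    by blast
  have "measure L {f \<in> space L. \<Phi> (restrict f J)} = (\<Sum>\<eta>\<in>{\<eta> \<in> PiE J (\<lambda>_. UNIV). \<Phi> \<eta>}. q J \<eta>)"
    if J: "finite J" for J \<Phi>
    using L J
    by (simp add: measure_local_event_sum[where X = "\<lambda>f. f"] prob_space.finite_measure cylinder
        measurable_component_sets_PiM)
  with L lim_local show ?thesis
    by auto
qed

lemma convergent_subsequence_countable:
  fixes G :: "nat \<Rightarrow> 't \<Rightarrow> real"
  assumes T: "countable T" and bounded: "\<And>i t. \<bar>G i t\<bar> \<le> B"
  shows "\<exists>s. strict_mono s \<and> (\<forall>t\<in>T. convergent (\<lambda>k. G (s k) t))"
proof -
  interpret subseqs "\<lambda>n s. convergent (\<lambda>k. G (s k) (from_nat_into T n))"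
  proof
    fix n and s :: "nat \<Rightarrow> nat"
    have "bounded (range (\<lambda>k. G (s k) (from_nat_into T n)))"
      unfolding bounded_real using bounded by auto
    then obtain r l where "strict_mono r" "((\<lambda>k. G (s k) (from_nat_into T n)) \<circ> r) \<longlonglongrightarrow> l"
      using bounded_imp_convergent_subsequence by blast
    then show "\<exists>r. strict_mono r \<and> convergent (\<lambda>k. G ((s \<circ> r) k) (from_nat_into T n))"
      by (auto simp: convergent_def o_def)
  qed
  have "convergent (\<lambda>k. G (diagseq k) (from_nat_into T n))" for n
  proof -
    have "convergent (\<lambda>k. G ((diagseq \<circ> (+) (Suc n)) k) (from_nat_into T n))"
      by (rule diagseq_holds) (auto dest: convergent_subseq_convergent simp: o_def)
    then have "convergent (\<lambda>k. G (diagseq (k + Suc n)) (from_nat_into T n))"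
      by (simp add: o_def add.commute)
    then show ?thesis
      by (rule convergent_ignore_initial_segment[THEN iffD1])
  qed
  then show ?thesis
    using subseq_diagseq by (metis T from_nat_into_to_nat_on)
qed

lemma convergent_cylinders_subsequence:
  fixes X :: "nat \<Rightarrow> 'm \<Rightarrow> 'i::countable \<Rightarrow> 'b::finite"
  assumes prob: "\<And>k. prob_space (M k)"
  shows "\<exists>s. strict_mono s \<and> (\<forall>J \<eta>. finite J \<longrightarrow>
    convergent (\<lambda>k. measure (M (s k)) {x \<in> space (M (s k)). restrict (X (s k) x) J = \<eta>}))"
proof -
  define T where "T = (SIGMA J:{J :: 'i set. finite J}. PiE J (\<lambda>_. UNIV :: 'b set))"
  have "countable T"
    unfolding T_def by (intro countable_SIGMA countable_PiE) (auto intro: countable_Collect_finite)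
  then obtain s where s: "strict_mono s"
    and conv_T: "\<And>J \<eta>. (J, \<eta>) \<in> T \<Longrightarrow>
      convergent (\<lambda>k. measure (M (s k)) {x \<in> space (M (s k)). restrict (X (s k) x) J = \<eta>})"
    using convergent_subsequence_countable[where B = 1 and
        G = "\<lambda>k (J, \<eta>). measure (M k) {x \<in> space (M k). restrict (X k x) J = \<eta>}"]
      prob by (fastforce simp: prob_space.prob_le_1)
  have "convergent (\<lambda>k. measure (M (s k)) {x \<in> space (M (s k)). restrict (X (s k) x) J = \<eta>})"
    if "finite J" for J \<eta>
  proof (cases "\<eta> \<in> PiE J (\<lambda>_. UNIV)")
    case False
    then have "{x \<in> space (M (s k)). restrict (X (s k) x) J = \<eta>} = {}" for k
      by auto
    then show ?thesis
      by (simp only: measure_empty convergent_const)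
  qed (use conv_T that in \<open>simp add: T_def\<close>)
  with s show ?thesis
    by blast
qed

section \<open>Independence of coordinate processes\<close>

lemma Int_stable_vimage:
  assumes "Int_stable G"
  shows "Int_stable {f -` A \<inter> \<Omega> | A. A \<in> G}"
proof (rule Int_stableI)
  fix a b assume "a \<in> {f -` A \<inter> \<Omega> | A. A \<in> G}" "b \<in> {f -` A \<inter> \<Omega> | A. A \<in> G}"
  then obtain A B where "a = f -` A \<inter> \<Omega>" "b = f -` B \<inter> \<Omega>" "A \<in> G" "B \<in> G"
    by blast
  then have "a \<inter> b = f -` (A \<inter> B) \<inter> \<Omega>" "A \<inter> B \<in> G"
    using assms by (auto simp: Int_stable_def)
  then show "a \<inter> b \<in> {f -` A \<inter> \<Omega> | A. A \<in> G}"
    by blast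
qed

lemma vimage_prod_emb_PiE_count_space:
  assumes Z: "Z \<in> measurable M (PiM K (\<lambda>_. count_space UNIV))" and "J \<subseteq> K"
  shows "Z -` prod_emb K (\<lambda>_. count_space UNIV) J (PiE J F) \<inter> space M = {x \<in> space M. \<forall>v\<in>J. Z x v \<in> F v}"
  using measurable_space[OF Z] \<open>J \<subseteq> K\<close> by (auto simp: prod_emb_iff space_PiM restrict_PiE_iff PiE_def Pi_iff)

lemma sigma_sets_vimage_prod_algebra:
  assumes Z: "Z \<in> measurable M (PiM K N)"
  shows "sigma_sets (space M) {Z -` A \<inter> space M | A. A \<in> sets (PiM K N)} =
    sigma_sets (space M) {Z -` A \<inter> space M | A. A \<in> prod_algebra K N}"
proof -
  have "{Z -` A \<inter> space M | A. A \<in> sets (PiM K N)} =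
      sigma_sets (space M) {Z -` A \<inter> space M | A. A \<in> prod_algebra K N}"
    using measurable_space[OF Z] unfolding sets_PiM space_PiM
    by (intro sigma_sets_vimage_commute) auto
  then show ?thesis
    by (simp only:) (rule sigma_sets_sigma_sets_eq, blast)
qed

lemma (in prob_space) indep_var_PiM_count_spaceD:
  fixes X Y :: "'a \<Rightarrow> 'i \<Rightarrow> 'b"
  assumes indep: "indep_var (PiM I (\<lambda>_. count_space UNIV)) X (PiM I' (\<lambda>_. count_space UNIV)) Y"
    and J: "finite J" "J \<subseteq> I" and J': "finite J'" "J' \<subseteq> I'"
  shows "prob {x \<in> space M. (\<forall>v\<in>J. X x v \<in> F v) \<and> (\<forall>v\<in>J'. Y x v \<in> G v)} =
    prob {x \<in> space M. \<forall>v\<in>J. X x v \<in> F v} * prob {x \<in> space M. \<forall>v\<in>J'. Y x v \<in> G v}"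
proof -
  let ?A = "prod_emb I (\<lambda>_. count_space UNIV) J (PiE J F)"
  let ?B = "prod_emb I' (\<lambda>_. count_space UNIV) J' (PiE J' G)"
  note X = vimage_prod_emb_PiE_count_space[OF indep_var_rv1[OF indep] J(2)]
  note Y = vimage_prod_emb_PiE_count_space[OF indep_var_rv2[OF indep] J'(2)]
  have "?A \<in> sets (PiM I (\<lambda>_. count_space UNIV))" "?B \<in> sets (PiM I' (\<lambda>_. count_space UNIV))"
    using J J' by (simp_all add: sets_PiM_I)
  from indep_varD[OF indep this]
  have "prob ((\<lambda>x. (X x, Y x)) -` (?A \<times> ?B) \<inter> space M) = prob (X -` ?A \<inter> space M) * prob (Y -` ?B \<inter> space M)" .
  moreover have "(\<lambda>x. (X x, Y x)) -` (?A \<times> ?B) \<inter> space M =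
      {x \<in> space M. (\<forall>v\<in>J. X x v \<in> F v) \<and> (\<forall>v\<in>J'. Y x v \<in> G v)}"
    using X[of F] Y[of G] by blast
  ultimately show ?thesis
    by (simp only: X Y)
qed

lemma (in prob_space) indep_var_PiM_count_spaceI:
  fixes X Y :: "'a \<Rightarrow> 'i \<Rightarrow> 'b"
  assumes X: "random_variable (PiM I (\<lambda>_. count_space UNIV)) X"
    and Y: "random_variable (PiM I' (\<lambda>_. count_space UNIV)) Y"
    and mult: "\<And>J F J' G. finite J \<Longrightarrow> J \<subseteq> I \<Longrightarrow> finite J' \<Longrightarrow> J' \<subseteq> I' \<Longrightarrow>
      prob {x \<in> space M. (\<forall>v\<in>J. X x v \<in> F v) \<and> (\<forall>v\<in>J'. Y x v \<in> G v)} =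
      prob {x \<in> space M. \<forall>v\<in>J. X x v \<in> F v} * prob {x \<in> space M. \<forall>v\<in>J'. Y x v \<in> G v}"
  shows "indep_var (PiM I (\<lambda>_. count_space UNIV)) X (PiM I' (\<lambda>_. count_space UNIV)) Y"
proof -
  let ?GX = "{X -` A \<inter> space M | A. A \<in> prod_algebra I (\<lambda>_. count_space UNIV)}"
  let ?GY = "{Y -` A \<inter> space M | A. A \<in> prod_algebra I' (\<lambda>_. count_space UNIV)}"
  have "indep_set ?GX ?GY"
    unfolding indep_sets2_eq
  proof (safe intro!: ballI)
    fix A :: "('i \<Rightarrow> 'b) set" assume "A \<in> prod_algebra I (\<lambda>_. count_space UNIV)"
    then show "X -` A \<inter> space M \<in> events"
      by (intro measurable_sets[OF X]) (simp add: sets_PiM sigma_sets.Basic)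
  next
    fix A :: "('i \<Rightarrow> 'b) set" assume "A \<in> prod_algebra I' (\<lambda>_. count_space UNIV)"
    then show "Y -` A \<inter> space M \<in> events"
      by (intro measurable_sets[OF Y]) (simp add: sets_PiM sigma_sets.Basic)
  next
    fix A B :: "('i \<Rightarrow> 'b) set"
    assume A: "A \<in> prod_algebra I (\<lambda>_. count_space UNIV)" and B: "B \<in> prod_algebra I' (\<lambda>_. count_space UNIV)"
    obtain J F where A_eq: "A = prod_emb I (\<lambda>_. count_space UNIV) J (PiE J F)" and J: "finite J" "J \<subseteq> I"
      using A by (rule prod_algebraE) blast
    obtain J' G where B_eq: "B = prod_emb I' (\<lambda>_. count_space UNIV) J' (PiE J' G)" and J': "finite J'" "J' \<subseteq> I'"
      using B by (rule prod_algebraE) blast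
    note X_cyl = vimage_prod_emb_PiE_count_space[OF X J(2)]
    note Y_cyl = vimage_prod_emb_PiE_count_space[OF Y J'(2)]
    have "(X -` A \<inter> space M) \<inter> (Y -` B \<inter> space M) =
        {x \<in> space M. (\<forall>v\<in>J. X x v \<in> F v) \<and> (\<forall>v\<in>J'. Y x v \<in> G v)}"
      using X_cyl[of F] Y_cyl[of G] unfolding A_eq B_eq by blast
    then show "prob ((X -` A \<inter> space M) \<inter> (Y -` B \<inter> space M)) = prob (X -` A \<inter> space M) * prob (Y -` B \<inter> space M)"
      using mult[OF J J'] unfolding A_eq B_eq X_cyl Y_cyl by simp
  qed
  then have "indep_set (sigma_sets (space M) ?GX) (sigma_sets (space M) ?GY)"
    by (rule indep_set_sigma_sets) (simp_all add: Int_stable_vimage Int_stable_prod_algebra)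
  then show ?thesis
    unfolding indep_var_eq sigma_sets_vimage_prod_algebra[OF X] sigma_sets_vimage_prod_algebra[OF Y]
    using X Y by blast
qed

section \<open>Local convergence of pairs of configurations\<close>

definition local_on :: "'i set \<Rightarrow> (('i \<Rightarrow> 'b) \<times> ('i \<Rightarrow> 'b) \<Rightarrow> bool) \<Rightarrow> bool" where
  "local_on K P \<longleftrightarrow> (\<forall>p q. (\<forall>v\<in>K. fst p v = fst q v \<and> snd p v = snd q v) \<longrightarrow> P p = P q)"

definition converges_locally ::
  "(nat \<Rightarrow> (('i \<Rightarrow> 'b) \<times> ('i \<Rightarrow> 'b)) measure) \<Rightarrow> (('i \<Rightarrow> 'b) \<times> ('i \<Rightarrow> 'b)) measure \<Rightarrow> bool" where
  "converges_locally N L \<longleftrightarrow> (\<forall>K P. finite K \<longrightarrow> local_on K P \<longrightarrow>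
     (\<lambda>k. measure (N k) {p \<in> space (N k). P p}) \<longlonglongrightarrow> measure L {p \<in> space L. P p})"

lemma converges_locallyD:
  "converges_locally N L \<Longrightarrow> finite K \<Longrightarrow> local_on K P \<Longrightarrow>
    (\<lambda>k. measure (N k) {p \<in> space (N k). P p}) \<longlonglongrightarrow> measure L {p \<in> space L. P p}"
  by (simp add: converges_locally_def)

lemma local_onD:
  assumes "local_on K P" "\<And>v. v \<in> K \<Longrightarrow> fst p v = fst q v" "\<And>v. v \<in> K \<Longrightarrow> snd p v = snd q v"
  shows "P p = P q"
  using assms unfolding local_on_def by blast

lemma measurable_zip:
  fixes N :: "(('i \<Rightarrow> 'b::countable) \<times> ('i \<Rightarrow> 'b)) measure"
  assumes "\<And>v. (\<lambda>p. fst p v) \<in> measurable N (count_space UNIV)"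
    and "\<And>v. (\<lambda>p. snd p v) \<in> measurable N (count_space UNIV)"
  shows "(\<lambda>p. (fst p v, snd p v)) \<in> measurable N (count_space UNIV)"
  using measurable_Pair[OF assms] by (simp add: pair_measure_countable)

lemma local_event_sets_pair:
  fixes N :: "(('i \<Rightarrow> 'b::countable) \<times> ('i \<Rightarrow> 'b)) measure"
  assumes fst: "\<And>v. (\<lambda>p. fst p v) \<in> measurable N (count_space UNIV)"
    and snd: "\<And>v. (\<lambda>p. snd p v) \<in> measurable N (count_space UNIV)"
    and K: "finite K" and P: "local_on K P"
  shows "{p \<in> space N. P p} \<in> sets N"
proof -
  let ?unzip = "\<lambda>\<xi>. (\<lambda>v. fst (\<xi> v), \<lambda>v. snd (\<xi> v))"
  have "P (?unzip (restrict (\<lambda>v. (fst p v, snd p v)) K)) = P p" for p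
    by (rule local_onD[OF P]) auto
  then have "{p \<in> space N. P p} = {p \<in> space N. P (?unzip (restrict (\<lambda>v. (fst p v, snd p v)) K))}"
    by simp
  also have "\<dots> \<in> sets N"
    by (rule local_event_sets[OF K measurable_zip[OF fst snd]])
  finally show ?thesis .
qed

lemma converges_locally_distr_unzip:
  fixes N :: "nat \<Rightarrow> (('i \<Rightarrow> 'b::countable) \<times> ('i \<Rightarrow> 'b)) measure"
  defines "unzip \<equiv> \<lambda>\<omega>. (\<lambda>v. fst (\<omega> v), \<lambda>v. snd (\<omega> v))"
    and "C \<equiv> PiM UNIV (\<lambda>_. count_space UNIV) :: ('i \<Rightarrow> 'b) measure"
  assumes sets_L: "sets L = sets (PiM UNIV (\<lambda>_. count_space UNIV))"
    and lim: "\<And>J \<Phi>. finite J \<Longrightarrow>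
      (\<lambda>k. measure (N k) {p \<in> space (N k). \<Phi> (restrict (\<lambda>v. (fst p v, snd p v)) J)})
        \<longlonglongrightarrow> measure L {\<omega> \<in> space L. \<Phi> (restrict \<omega> J)}"
  shows "unzip \<in> measurable L (C \<Otimes>\<^sub>M C)" and "converges_locally N (distr L (C \<Otimes>\<^sub>M C) unzip)"
proof -
  show unzip: "unzip \<in> measurable L (C \<Otimes>\<^sub>M C)"
    unfolding unzip_def C_def
    by (intro measurable_Pair measurable_PiM_single')
       (auto intro!: measurable_compose[OF measurable_component_sets_PiM[OF sets_L]])
  show "converges_locally N (distr L (C \<Otimes>\<^sub>M C) unzip)"
    unfolding converges_locally_def
  proof (intro allI impI)
    fix K and P :: "('i \<Rightarrow> 'b) \<times> ('i \<Rightarrow> 'b) \<Rightarrow> bool"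
    assume K: "finite K" and P: "local_on K P"
    have P_unzip: "P (unzip (restrict \<omega> K)) = P (unzip \<omega>)" for \<omega>
      by (rule local_onD[OF P]) (auto simp: unzip_def)
    have "{p \<in> space (C \<Otimes>\<^sub>M C). P p} \<in> sets (C \<Otimes>\<^sub>M C)"
      by (rule local_event_sets_pair[OF _ _ K P])
         (simp_all add: C_def measurable_compose[OF measurable_fst] measurable_compose[OF measurable_snd]
           measurable_component_PiM_count_space)
    then have "measure (distr L (C \<Otimes>\<^sub>M C) unzip) {p \<in> space (distr L (C \<Otimes>\<^sub>M C) unzip). P p} =
        measure L {\<omega> \<in> space L. P (unzip (restrict \<omega> K))}"
      unfolding P_unzip using measurable_space[OF unzip]
      by (subst measure_distr[OF unzip]) (auto intro!: arg_cong[where f = "measure L"])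
    moreover have "P p = P (unzip (restrict (\<lambda>v. (fst p v, snd p v)) K))" for p
      unfolding P_unzip by (simp add: unzip_def)
    ultimately show "(\<lambda>k. measure (N k) {p \<in> space (N k). P p}) \<longlonglongrightarrow>
        measure (distr L (C \<Otimes>\<^sub>M C) unzip) {p \<in> space (distr L (C \<Otimes>\<^sub>M C) unzip). P p}"
      using lim[OF K, of "\<lambda>\<xi>. P (unzip \<xi>)"] by simp
  qed
qed

lemma converges_locally_subsequence:
  fixes N :: "nat \<Rightarrow> (('i::countable \<Rightarrow> 'b::finite) \<times> ('i \<Rightarrow> 'b)) measure"
  assumes prob: "\<And>k. prob_space (N k)"
    and fst: "\<And>k v. (\<lambda>p. fst p v) \<in> measurable (N k) (count_space UNIV)"
    and snd: "\<And>k v. (\<lambda>p. snd p v) \<in> measurable (N k) (count_space UNIV)"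
  shows "\<exists>s L. strict_mono s \<and> prob_space L \<and>
    sets L = sets (PiM UNIV (\<lambda>_. count_space UNIV) \<Otimes>\<^sub>M PiM UNIV (\<lambda>_. count_space UNIV)) \<and>
    converges_locally (\<lambda>k. N (s k)) L"
proof -
  let ?zip = "\<lambda>k p. \<lambda>v. (fst p v, snd p v)"
  obtain s where s: "strict_mono s" and conv: "\<And>J \<eta>. finite J \<Longrightarrow>
      convergent (\<lambda>k. measure (N (s k)) {p \<in> space (N (s k)). restrict (?zip (s k) p) J = \<eta>})"
    using convergent_cylinders_subsequence[of N ?zip] prob by blast
  obtain L2 :: "('i \<Rightarrow> 'b \<times> 'b) measure" where L2: "prob_space L2"
    "sets L2 = sets (PiM UNIV (\<lambda>_. count_space UNIV))"
    and lim_L2: "\<And>J \<Phi>. finite J \<Longrightarrow>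
      (\<lambda>k. measure (N (s k)) {p \<in> space (N (s k)). \<Phi> (restrict (\<lambda>v. (fst p v, snd p v)) J)})
        \<longlonglongrightarrow> measure L2 {\<omega> \<in> space L2. \<Phi> (restrict \<omega> J)}"
    using limit_measure_of_convergent_cylinders[of "\<lambda>k. N (s k)" "\<lambda>k p v. (fst p v, snd p v)"]
      prob measurable_zip[OF fst snd] conv by auto
  note unzip = converges_locally_distr_unzip[OF L2(2), of "\<lambda>k. N (s k)", OF lim_L2]
  show ?thesis
    using s unzip(2) prob_space.prob_space_distr[OF L2(1) unzip(1)] by fastforce
qed

lemma converges_locally_mult:
  assumes conv: "converges_locally N L" and K: "finite K" "local_on K P" "local_on K Q"
    and mult: "eventually (\<lambda>k. measure (N k) {p \<in> space (N k). P p \<and> Q p} =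
      measure (N k) {p \<in> space (N k). P p} * measure (N k) {p \<in> space (N k). Q p}) sequentially"
  shows "measure L {p \<in> space L. P p \<and> Q p} = measure L {p \<in> space L. P p} * measure L {p \<in> space L. Q p}"
proof -
  have "local_on K (\<lambda>p. P p \<and> Q p)"
    using K unfolding local_on_def by blast
  then have "(\<lambda>k. measure (N k) {p \<in> space (N k). P p \<and> Q p}) \<longlonglongrightarrow> measure L {p \<in> space L. P p \<and> Q p}"
    using conv K by (simp add: converges_locally_def)
  moreover have "(\<lambda>k. measure (N k) {p \<in> space (N k). P p \<and> Q p}) \<longlonglongrightarrow>
      measure L {p \<in> space L. P p} * measure L {p \<in> space L. Q p}"
    using conv K by (subst tendsto_cong[OF mult]) (intro tendsto_mult, simp_all add: converges_locally_def)
  ultimately show ?thesis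
    by (rule LIMSEQ_unique)
qed

lemma measurable_config_pair:
  fixes N :: "((int ^ 'd::finite \<Rightarrow> 'a) \<times> (int ^ 'd \<Rightarrow> 'a)) measure"
  assumes "sets N = sets (config_space D \<Otimes>\<^sub>M config_space D')"
  shows measurable_config_fst: "fst \<in> measurable N (config_space D)"
    and measurable_config_snd: "snd \<in> measurable N (config_space D')"
    and measurable_config_fst_at: "(\<lambda>p. fst p v) \<in> measurable N (count_space UNIV)"
    and measurable_config_snd_at: "(\<lambda>p. snd p v) \<in> measurable N (count_space UNIV)"
proof -
  show fst: "fst \<in> measurable N (config_space D)" and snd: "snd \<in> measurable N (config_space D')"
    by (simp_all add: measurable_cong_sets[OF assms refl])
  show "(\<lambda>p. fst p v) \<in> measurable N (count_space UNIV)" "(\<lambda>p. snd p v) \<in> measurable N (count_space UNIV)"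
    using measurable_compose[OF fst measurable_component_PiM_count_space[of v D, folded config_space_def]]
      measurable_compose[OF snd measurable_component_PiM_count_space[of v D', folded config_space_def]]
    by simp_all
qed

lemma is_coupling_cylinder:
  fixes \<nu> :: "((int ^ 'd::finite \<Rightarrow> 'a::countable) \<times> (int ^ 'd \<Rightarrow> 'a)) measure"
  assumes coupling: "is_coupling \<nu> \<mu> D \<mu>' D'" and J: "finite J"
  shows is_coupling_cylinder_fst:
      "measure \<nu> {p \<in> space \<nu>. restrict (fst p) J = \<eta>} = measure \<mu> {f \<in> space \<mu>. restrict f J = \<eta>}"
    and is_coupling_cylinder_snd:
      "measure \<nu> {p \<in> space \<nu>. restrict (snd p) J = \<eta>} = measure \<mu>' {f \<in> space \<mu>'. restrict f J = \<eta>}"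
proof -
  have cylinder: "{f \<in> space (config_space E). restrict f J = \<eta>} \<in> sets (config_space E)" for E
    unfolding config_space_def
    by (rule local_event_sets[where X = "\<lambda>f. f" and \<Phi> = "\<lambda>\<xi>. \<xi> = \<eta>", OF J measurable_component_PiM_count_space])
  have sets: "sets \<nu> = sets (config_space D \<Otimes>\<^sub>M config_space D')"
    and marginals: "\<mu> = distr \<nu> (config_space D) fst" "\<mu>' = distr \<nu> (config_space D') snd"
    using coupling by (simp_all add: is_coupling_def)
  show "measure \<nu> {p \<in> space \<nu>. restrict (fst p) J = \<eta>} = measure \<mu> {f \<in> space \<mu>. restrict f J = \<eta>}"
    unfolding marginals space_distr using measurable_space[OF measurable_config_fst[OF sets]]
    by (subst measure_distr[OF measurable_config_fst[OF sets] cylinder])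
       (auto intro!: arg_cong[where f = "measure \<nu>"])
  show "measure \<nu> {p \<in> space \<nu>. restrict (snd p) J = \<eta>} = measure \<mu>' {f \<in> space \<mu>'. restrict f J = \<eta>}"
    unfolding marginals space_distr using measurable_space[OF measurable_config_snd[OF sets]]
    by (subst measure_distr[OF measurable_config_snd[OF sets] cylinder])
       (auto intro!: arg_cong[where f = "measure \<nu>"])
qed

lemma converges_locally_distr_eq:
  fixes N :: "nat \<Rightarrow> ((int ^ 'd::finite \<Rightarrow> 'a::finite) \<times> (int ^ 'd \<Rightarrow> 'a)) measure"
  assumes \<pi>: "\<pi> = fst \<or> \<pi> = snd" and conv: "converges_locally N \<nu>"
    and \<nu>: "prob_space \<nu>" "sets \<nu> = sets (config_space UNIV \<Otimes>\<^sub>M config_space UNIV)"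
    and L: "prob_space L" "sets L = sets (config_space UNIV)"
    and lim: "\<And>J \<eta>. finite J \<Longrightarrow> (\<lambda>k. measure (N k) {p \<in> space (N k). restrict (\<pi> p) J = \<eta>})
      \<longlonglongrightarrow> measure L {f \<in> space L. restrict f J = \<eta>}"
  shows "distr \<nu> (config_space UNIV) \<pi> = L"
  unfolding config_space_def
proof (rule distr_eqI_cylinders)
  show "\<pi> \<in> measurable \<nu> (PiM UNIV (\<lambda>_. count_space UNIV))"
    using \<pi> measurable_config_fst[OF \<nu>(2)] measurable_config_snd[OF \<nu>(2)] by (auto simp: config_space_def)
  fix J :: "(int ^ 'd) set" and \<eta> assume J: "finite J"
  have "local_on J (\<lambda>p. restrict (\<pi> p) J = \<eta>)"
    using \<pi> by (auto simp: local_on_def restrict_def fun_eq_iff)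
  from converges_locallyD[OF conv J this] lim[OF J]
  show "measure \<nu> {p \<in> space \<nu>. restrict (\<pi> p) J = \<eta>} = measure L {f \<in> space L. restrict f J = \<eta>}"
    by (rule LIMSEQ_unique)
qed (use \<nu> L in \<open>simp_all add: config_space_def\<close>)

lemma converges_locally_indep_var:
  fixes N :: "nat \<Rightarrow> ((int ^ 'd::finite \<Rightarrow> 'a::countable) \<times> (int ^ 'd \<Rightarrow> 'a)) measure"
  assumes prob: "\<And>k. prob_space (N k)"
    and indep: "\<And>k. prob_space.indep_var (N k)
      (config_space (E k - B)) (\<lambda>p. restrict (fst p) (E k - B)) (config_space (E k)) snd"
    and exhaust: "\<And>J. finite J \<Longrightarrow> eventually (\<lambda>k. J \<subseteq> E k) sequentially"
    and "prob_space \<nu>" and sets_\<nu>: "sets \<nu> = sets (config_space UNIV \<Otimes>\<^sub>M config_space UNIV)"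
    and conv: "converges_locally N \<nu>"
  shows "prob_space.indep_var \<nu>
    (config_space (UNIV - B)) (\<lambda>p. restrict (fst p) (UNIV - B)) (config_space UNIV) snd"
proof -
  have restrict_fst_in: "(\<forall>v\<in>J. restrict (fst p) I v \<in> F v) \<longleftrightarrow> (\<forall>v\<in>J. fst p v \<in> F v)"
    if "J \<subseteq> I" for J I F and p :: "(int ^ 'd \<Rightarrow> 'a) \<times> (int ^ 'd \<Rightarrow> 'a)"
    using that by auto
  have product: "measure \<nu> {p \<in> space \<nu>. (\<forall>v\<in>J. fst p v \<in> F v) \<and> (\<forall>v\<in>J'. snd p v \<in> G v)} =
      measure \<nu> {p \<in> space \<nu>. \<forall>v\<in>J. fst p v \<in> F v} * measure \<nu> {p \<in> space \<nu>. \<forall>v\<in>J'. snd p v \<in> G v}"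
    if J: "finite J" "J \<subseteq> UNIV - B" and J': "finite J'" for J J' F G
  proof (rule converges_locally_mult[OF conv finite_UnI[OF J(1) J']])
    show "local_on (J \<union> J') (\<lambda>p. \<forall>v\<in>J. fst p v \<in> F v)" "local_on (J \<union> J') (\<lambda>p. \<forall>v\<in>J'. snd p v \<in> G v)"
      by (auto simp: local_on_def)
    show "eventually (\<lambda>k. measure (N k) {p \<in> space (N k). (\<forall>v\<in>J. fst p v \<in> F v) \<and> (\<forall>v\<in>J'. snd p v \<in> G v)} =
        measure (N k) {p \<in> space (N k). \<forall>v\<in>J. fst p v \<in> F v} *
        measure (N k) {p \<in> space (N k). \<forall>v\<in>J'. snd p v \<in> G v}) sequentially"
      using exhaust[OF finite_UnI[OF J(1) J']]
    proof (rule eventually_mono)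
      fix k assume "J \<union> J' \<subseteq> E k"
      then have J_sub: "J \<subseteq> E k - B" and J'_sub: "J' \<subseteq> E k"
        using J by auto
      interpret N: prob_space "N k"
        by (rule prob)
      from N.indep_var_PiM_count_spaceD[OF indep[of k, unfolded config_space_def] J(1) J_sub J' J'_sub]
      show "measure (N k) {p \<in> space (N k). (\<forall>v\<in>J. fst p v \<in> F v) \<and> (\<forall>v\<in>J'. snd p v \<in> G v)} =
          measure (N k) {p \<in> space (N k). \<forall>v\<in>J. fst p v \<in> F v} *
          measure (N k) {p \<in> space (N k). \<forall>v\<in>J'. snd p v \<in> G v}"
        by (simp only: restrict_fst_in[OF J_sub])
    qed
  qed
  interpret prob_space \<nu> by fact
  have "(\<lambda>p. restrict (fst p) (UNIV - B)) \<in> measurable \<nu> (PiM (UNIV - B) (\<lambda>_. count_space UNIV))"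
    using measurable_compose[OF measurable_config_fst[OF sets_\<nu>, unfolded config_space_def]
        measurable_restrict_subset[OF Diff_subset]] by simp
  moreover have "snd \<in> measurable \<nu> (PiM UNIV (\<lambda>_. count_space UNIV))"
    using measurable_config_snd[OF sets_\<nu>] by (simp add: config_space_def)
  ultimately show ?thesis
    unfolding config_space_def
    by (rule indep_var_PiM_count_spaceI) (simp only: restrict_fst_in product)
qed

lemma finite_box: "finite (box n :: (int ^ 'd::finite) set)"
proof -
  have "box n \<subseteq> vec_lambda ` PiE UNIV (\<lambda>_::'d. {-int n..int n})"
  proof
    fix v :: "int ^ 'd" assume "v \<in> box n"
    then have "vec_nth v \<in> PiE UNIV (\<lambda>_. {-int n..int n})"
      by (auto simp: box_def abs_le_iff minus_le_iff)
    then show "v \<in> vec_lambda ` PiE UNIV (\<lambda>_::'d. {-int n..int n})"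
      by (metis image_eqI vec_nth_inverse)
  qed
  then show ?thesis
    by (rule finite_subset) (simp add: finite_PiE)
qed

lemma incseq_box: "incseq box"
  by (auto simp: incseq_def box_def intro: order_trans)

lemma UN_box: "(\<Union>n. box n) = UNIV"
proof -
  have "v \<in> box (Max (range (\<lambda>i. nat \<bar>v $ i\<bar>)))" for v :: "int ^ 'd"
    unfolding box_def by (auto simp flip: nat_le_iff)
  then show ?thesis
    by blast
qed

lemma eventually_subset_incseq:
  assumes "incseq A" "finite J" "J \<subseteq> (\<Union>i. A i)"
  shows "eventually (\<lambda>i. J \<subseteq> A i) sequentially"
  using assms(2,3)
proof (induction J rule: finite_induct)
  case (insert v J)
  obtain i where "v \<in> A i"
    using insert.prems by blast
  then have "eventually (\<lambda>j. v \<in> A j) sequentially"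
    using \<open>incseq A\<close> by (auto simp: eventually_sequentially incseq_def)
  with insert show ?case
    by (auto elim: eventually_mono[OF eventually_conj])
qed simp

definition mixing_coupling ::
  "(nat \<Rightarrow> real) \<Rightarrow> nat \<Rightarrow> ((int ^ 'd::finite \<Rightarrow> 'a) \<times> (int ^ 'd \<Rightarrow> 'a)) measure \<Rightarrow>
   (int ^ 'd \<Rightarrow> 'a) measure \<Rightarrow> (int ^ 'd) set \<Rightarrow> (int ^ 'd \<Rightarrow> 'a) measure \<Rightarrow> (int ^ 'd) set \<Rightarrow> bool" where
  "mixing_coupling \<rho> n \<nu> \<mu> D \<mu>' D' \<longleftrightarrow> is_coupling \<nu> \<mu> D \<mu>' D' \<and>
     prob_space.indep_var \<nu> (config_space (D - box n)) (\<lambda>p. restrict (fst p) (D - box n)) (config_space D') snd \<and>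
     (\<forall>k\<le>n. \<forall>v\<in>box k. measure \<nu> {p \<in> space \<nu>. fst p v \<noteq> snd p v} \<le> \<rho> (n - k))"

lemma mixing_coupling_cylinder_diff_le:
  fixes \<mu> \<mu>' :: "(int ^ 'd::finite \<Rightarrow> 'a::countable) measure" and \<rho> :: "nat \<Rightarrow> real"
  assumes \<nu>: "mixing_coupling \<rho> n \<nu> \<mu> D \<mu>' D'" and J: "finite J" "J \<subseteq> box k" and "k \<le> n"
  shows "\<bar>measure \<mu> {f \<in> space \<mu>. restrict f J = \<eta>} - measure \<mu>' {f \<in> space \<mu>'. restrict f J = \<eta>}\<bar>
    \<le> real (card J) * \<rho> (n - k)"
proof -
  have coupling: "is_coupling \<nu> \<mu> D \<mu>' D'"
    using \<nu> by (simp add: mixing_coupling_def)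
  then have sets: "sets \<nu> = sets (config_space D \<Otimes>\<^sub>M config_space D')"
    by (simp add: is_coupling_def)
  interpret prob_space \<nu>
    using coupling by (simp add: is_coupling_def)
  have "\<bar>prob {p \<in> space \<nu>. restrict (fst p) J = \<eta>} - prob {p \<in> space \<nu>. restrict (snd p) J = \<eta>}\<bar>
      \<le> (\<Sum>v\<in>J. prob {p \<in> space \<nu>. fst p v \<noteq> snd p v})"
    by (rule cylinder_prob_diff_le[where X = fst and Y = snd, OF J(1) measurable_config_fst_at[OF sets]
          measurable_config_snd_at[OF sets]])
  also have "\<dots> \<le> (\<Sum>v\<in>J. \<rho> (n - k))"
    using \<nu> \<open>k \<le> n\<close> J(2) by (intro sum_mono) (auto simp: mixing_coupling_def)
  finally show ?thesis
    by (simp add: is_coupling_cylinder_fst[OF coupling J(1)] is_coupling_cylinder_snd[OF coupling J(1)])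
qed

lemma locally_mixing_with_iff:
  "locally_mixing_with M \<rho> \<longleftrightarrow> rate_function \<rho> \<and>
    (\<forall>n\<ge>1. \<forall>(\<mu>, D)\<in>M. \<forall>(\<mu>', D')\<in>M. box n \<subseteq> D \<inter> D' \<longrightarrow> (\<exists>\<nu>. mixing_coupling \<rho> n \<nu> \<mu> D \<mu>' D'))"
  by (simp add: locally_mixing_with_def mixing_coupling_def)

section \<open>Limits of locally mixing sequences\<close>

locale mixing_sequence =
  fixes \<mu> :: "nat \<Rightarrow> ((int ^ 'd::finite) \<Rightarrow> 'a::finite) measure"
    and D :: "nat \<Rightarrow> (int ^ 'd) set"
    and \<rho> :: "nat \<Rightarrow> real"
  assumes prob: "\<And>i. prob_space (\<mu> i)"
    and sets_\<mu>: "\<And>i. sets (\<mu> i) = sets (config_space (D i))"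
    and mix: "locally_mixing_with (range (\<lambda>i. (\<mu> i, D i))) \<rho>"
    and incseq_D: "incseq D"
    and UN_D: "(\<Union>i. D i) = UNIV"
begin

lemma rate: "rate_function \<rho>"
  using mix by (simp add: locally_mixing_with_def)

lemma exists_mixing_coupling:
  assumes "n \<ge> 1" "box n \<subseteq> D i" "box n \<subseteq> D j"
  shows "\<exists>\<nu>. mixing_coupling \<rho> n \<nu> (\<mu> i) (D i) (\<mu> j) (D j)"
proof -
  have "\<forall>(\<mu>', D')\<in>range (\<lambda>i. (\<mu> i, D i)). \<forall>(\<mu>'', D'')\<in>range (\<lambda>i. (\<mu> i, D i)).
      box n \<subseteq> D' \<inter> D'' \<longrightarrow> (\<exists>\<nu>. mixing_coupling \<rho> n \<nu> \<mu>' D' \<mu>'' D'')"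
    using mix \<open>n \<ge> 1\<close> unfolding locally_mixing_with_iff by blast
  then show ?thesis
    using assms(2,3) by auto
qed

lemma eventually_subset_D: "finite J \<Longrightarrow> eventually (\<lambda>i. J \<subseteq> D i) sequentially"
  by (rule eventually_subset_incseq[OF incseq_D]) (auto simp: UN_D)

lemma convergent_cylinder:
  assumes J: "finite J"
  shows "convergent (\<lambda>i. measure (\<mu> i) {f \<in> space (\<mu> i). restrict f J = \<eta>})"
proof -
  define a where "a i = measure (\<mu> i) {f \<in> space (\<mu> i). restrict f J = \<eta>}" for i
  obtain k where k: "J \<subseteq> box k"
    using eventually_subset_incseq[OF incseq_box J] by (auto simp: UN_box eventually_sequentially)
  have "Cauchy a"
  proof (rule CauchyI)
    fix e :: real assume "0 < e"
    then have "0 < e / (card J + 1)"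
      by (intro divide_pos_pos) auto
    moreover have "\<rho> \<longlonglongrightarrow> 0"
      using rate by (simp add: rate_function_def)
    ultimately have "eventually (\<lambda>m. \<rho> m < e / (card J + 1)) sequentially"
      by (rule order_tendstoD(2)[rotated])
    then obtain m where m: "\<rho> (Suc m) < e / (card J + 1)"
      unfolding eventually_sequentially by (meson le_SucI order_refl)
    define n where "n = k + Suc m"
    obtain i0 where i0: "\<And>i. i \<ge> i0 \<Longrightarrow> box n \<subseteq> D i"
      using eventually_subset_D[OF finite_box] by (auto simp: eventually_sequentially)
    have "norm (a i - a j) < e" if "i \<ge> i0" "j \<ge> i0" for i j
    proof -
      have n: "1 \<le> n" "k \<le> n"
        by (simp_all add: n_def)
      from exists_mixing_coupling[OF n(1) i0[OF that(1)] i0[OF that(2)]]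
      obtain \<nu> where "mixing_coupling \<rho> n \<nu> (\<mu> i) (D i) (\<mu> j) (D j)" ..
      from mixing_coupling_cylinder_diff_le[OF this J k n(2)]
      have "\<bar>a i - a j\<bar> \<le> card J * \<rho> (Suc m)"
        by (simp add: a_def n_def)
      also have "\<dots> \<le> (card J + 1) * \<rho> (Suc m)"
        using rate by (intro mult_right_mono) (simp_all add: rate_function_def)
      also have "\<dots> < e"
        using m by (simp add: pos_less_divide_eq mult.commute)
      finally show ?thesis
        by simp
    qed
    then show "\<exists>M. \<forall>i\<ge>M. \<forall>j\<ge>M. norm (a i - a j) < e"
      by blast
  qed
  then show ?thesis
    unfolding a_def by (rule Cauchy_convergent)
qed

lemma exists_limit:
  "\<exists>L. prob_space L \<and> sets L = sets (config_space UNIV) \<and>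
    (\<forall>J \<eta>. finite J \<longrightarrow> (\<lambda>i. measure (\<mu> i) {f \<in> space (\<mu> i). restrict f J = \<eta>})
      \<longlonglongrightarrow> measure L {f \<in> space L. restrict f J = \<eta>})"
proof -
  have "(\<lambda>f. f v) \<in> measurable (\<mu> i) (count_space UNIV)" for i v
    using sets_\<mu> by (simp add: config_space_def measurable_component_sets_PiM)
  from limit_measure_of_convergent_cylinders[where X = "\<lambda>i f. f", OF prob this convergent_cylinder]
  obtain L where "prob_space L" "sets L = sets (config_space UNIV)"
    and lim: "\<And>J \<Phi>. finite J \<Longrightarrow>
      (\<lambda>i. measure (\<mu> i) {f \<in> space (\<mu> i). \<Phi> (restrict f J)}) \<longlonglongrightarrow> measure L {f \<in> space L. \<Phi> (restrict f J)}"
    by (auto simp: config_space_def)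
  moreover have "(\<lambda>i. measure (\<mu> i) {f \<in> space (\<mu> i). restrict f J = \<eta>}) \<longlonglongrightarrow> measure L {f \<in> space L. restrict f J = \<eta>}"
    if "finite J" for J \<eta>
    using lim[OF that, of "\<lambda>\<xi>. \<xi> = \<eta>"] by simp
  ultimately show ?thesis
    by blast
qed

lemma mixing_coupling_of_limit:
  assumes L: "prob_space L" "sets L = sets (config_space UNIV)"
    and lim_L: "\<And>J \<eta>. finite J \<Longrightarrow>
      (\<lambda>i. measure (\<mu> i) {f \<in> space (\<mu> i). restrict f J = \<eta>}) \<longlonglongrightarrow> measure L {f \<in> space L. restrict f J = \<eta>}"
    and r: "strict_mono r"
    and N: "\<And>k. mixing_coupling \<rho> n (N k) (\<mu> (r k)) (D (r k)) (\<mu> (r k)) (D (r k))"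
    and \<nu>: "prob_space \<nu>" "sets \<nu> = sets (config_space UNIV \<Otimes>\<^sub>M config_space UNIV)"
    and conv: "converges_locally N \<nu>"
  shows "mixing_coupling \<rho> n \<nu> L UNIV L UNIV"
proof -
  have coupling: "is_coupling (N k) (\<mu> (r k)) (D (r k)) (\<mu> (r k)) (D (r k))" for k
    using N by (simp add: mixing_coupling_def)
  then have prob_N: "prob_space (N k)" for k
    by (simp add: is_coupling_def)
  have marginal: "distr \<nu> (config_space UNIV) \<pi> = L" if \<pi>: "\<pi> = fst \<or> \<pi> = snd" for \<pi>
  proof (rule converges_locally_distr_eq[OF \<pi> conv \<nu> L])
    fix J :: "(int ^ 'd) set" and \<eta> assume J: "finite J"
    have "measure (N k) {p \<in> space (N k). restrict (\<pi> p) J = \<eta>} =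
        measure (\<mu> (r k)) {f \<in> space (\<mu> (r k)). restrict f J = \<eta>}" for k
      using \<pi> is_coupling_cylinder_fst[OF coupling J] is_coupling_cylinder_snd[OF coupling J] by auto
    then show "(\<lambda>k. measure (N k) {p \<in> space (N k). restrict (\<pi> p) J = \<eta>}) \<longlonglongrightarrow>
        measure L {f \<in> space L. restrict f J = \<eta>}"
      using LIMSEQ_subseq_LIMSEQ[OF lim_L[OF J] r] by (simp add: o_def)
  qed
  have "measure \<nu> {p \<in> space \<nu>. fst p v \<noteq> snd p v} \<le> \<rho> (n - k)" if "k \<le> n" "v \<in> box k" for k v
  proof (rule LIMSEQ_le_const2)
    have "local_on {v} (\<lambda>p. fst p v \<noteq> snd p v)"
      by (simp add: local_on_def)
    then show "(\<lambda>k. measure (N k) {p \<in> space (N k). fst p v \<noteq> snd p v}) \<longlonglongrightarrow> measure \<nu> {p \<in> space \<nu>. fst p v \<noteq> snd p v}"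
      by (rule converges_locallyD[OF conv finite.insertI[OF finite.emptyI]])
    show "\<exists>N0. \<forall>k'\<ge>N0. measure (N k') {p \<in> space (N k'). fst p v \<noteq> snd p v} \<le> \<rho> (n - k)"
      using N that unfolding mixing_coupling_def by blast
  qed
  moreover have "prob_space.indep_var \<nu>
      (config_space (UNIV - box n)) (\<lambda>p. restrict (fst p) (UNIV - box n)) (config_space UNIV) snd"
  proof (rule converges_locally_indep_var[OF prob_N _ _ \<nu> conv])
    show "prob_space.indep_var (N k) (config_space (D (r k) - box n)) (\<lambda>p. restrict (fst p) (D (r k) - box n))
        (config_space (D (r k))) snd" for k
      using N by (simp add: mixing_coupling_def)
    show "eventually (\<lambda>k. J \<subseteq> D (r k)) sequentially" if "finite J" for J
      using eventually_compose_filterlim[OF eventually_subset_D[OF that] filterlim_subseq[OF r]] .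
  qed
  ultimately show ?thesis
    using marginal \<nu> by (simp add: mixing_coupling_def is_coupling_def)
qed

lemma exists_limit_mixing_coupling:
  assumes L: "prob_space L" "sets L = sets (config_space UNIV)"
    and lim_L: "\<And>J \<eta>. finite J \<Longrightarrow>
      (\<lambda>i. measure (\<mu> i) {f \<in> space (\<mu> i). restrict f J = \<eta>}) \<longlonglongrightarrow> measure L {f \<in> space L. restrict f J = \<eta>}"
    and n: "n \<ge> 1"
  shows "\<exists>\<nu>. mixing_coupling \<rho> n \<nu> L UNIV L UNIV"
proof -
  obtain i0 where i0: "\<And>i. i \<ge> i0 \<Longrightarrow> box n \<subseteq> D i"
    using eventually_subset_D[OF finite_box] by (auto simp: eventually_sequentially)
  have "\<forall>k. \<exists>\<nu>. mixing_coupling \<rho> n \<nu> (\<mu> (k + i0)) (D (k + i0)) (\<mu> (k + i0)) (D (k + i0))"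
    using exists_mixing_coupling[OF n] i0 by simp
  then obtain N where N: "\<And>k. mixing_coupling \<rho> n (N k) (\<mu> (k + i0)) (D (k + i0)) (\<mu> (k + i0)) (D (k + i0))"
    by metis
  then have "prob_space (N k)" and sets_N: "sets (N k) = sets (config_space (D (k + i0)) \<Otimes>\<^sub>M config_space (D (k + i0)))" for k
    by (simp_all add: mixing_coupling_def is_coupling_def)
  then obtain s \<nu> where "strict_mono s" "prob_space \<nu>"
    "sets \<nu> = sets (config_space UNIV \<Otimes>\<^sub>M config_space UNIV)" "converges_locally (\<lambda>k. N (s k)) \<nu>"
    using converges_locally_subsequence[of N] measurable_config_fst_at[OF sets_N] measurable_config_snd_at[OF sets_N]
    by (auto simp: config_space_def)
  then have "mixing_coupling \<rho> n \<nu> L UNIV L UNIV"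
    using N by (intro mixing_coupling_of_limit[OF L lim_L, where r = "\<lambda>k. s k + i0" and N = "\<lambda>k. N (s k)"])
      (auto simp: strict_mono_def)
  then show ?thesis ..
qed

end

theorem proposition2p2:
  fixes \<mu> :: "nat \<Rightarrow> ((int ^ 'd::finite) \<Rightarrow> 'a::finite) measure"
    and D :: "nat \<Rightarrow> (int ^ 'd) set"
    and \<rho> :: "nat \<Rightarrow> real"
  assumes prob: "\<And>i. prob_space (\<mu> i)"
    and sets_mu: "\<And>i. sets (\<mu> i) = sets (config_space (D i))"
    and mix: "locally_mixing_with (range (\<lambda>i. (\<mu> i, D i))) \<rho>"
    and incD: "incseq D"
    and exhaust: "(\<Union>i. D i) = UNIV"
  shows "\<exists>\<mu>lim :: ((int ^ 'd) \<Rightarrow> 'a) measure.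
           prob_space \<mu>lim \<and> sets \<mu>lim = sets (config_space UNIV) \<and>
           (\<forall>F. finite F \<longrightarrow> (\<forall>\<eta> \<in> PiE F (\<lambda>_. UNIV).
              (\<lambda>i. measure (\<mu> i) {f \<in> space (\<mu> i). restrict f F = \<eta>})
                \<longlonglongrightarrow> measure \<mu>lim {f \<in> space \<mu>lim. restrict f F = \<eta>})) \<and>
           locally_mixing_with {(\<mu>lim, UNIV)} \<rho>"
proof -
  interpret mixing_sequence \<mu> D \<rho>
    using prob sets_mu mix incD exhaust by (rule mixing_sequence.intro)
  obtain L where L: "prob_space L" "sets L = sets (config_space UNIV)"
    and lim_L: "\<And>J \<eta>. finite J \<Longrightarrow>
      (\<lambda>i. measure (\<mu> i) {f \<in> space (\<mu> i). restrict f J = \<eta>}) \<longlonglongrightarrow> measure L {f \<in> space L. restrict f J = \<eta>}"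
    using exists_limit by blast
  have "locally_mixing_with {(L, UNIV)} \<rho>"
    unfolding locally_mixing_with_iff using rate exists_limit_mixing_coupling[OF L lim_L] by auto
  with L lim_L show ?thesis
    by blast
qed

end
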